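(* Fix integers $2\le k\le n'\le n$, $M=\lceil n/n'\rceil$, $r=n-(M-1)n'$, and consider the $n'$-grouped $(k,n)$ random-grid sharing of a secret bit $s$ described in the context. Let $\vec\lambda=(\lambda_1,\ldots,\lambda_M)$ be a valid partition and suppose $\lambda_j$ share bits (shadow images) are selected from group $j$ for each $j$. For $s\in\{0,1\}$ let $t_s$ be the probability that the logical OR of the selected share bits equals $0$ when the secret bit is $s$. Then $$t_0=\frac{\Pr(\#C(\vec\lambda)=k)}{2^{k-1}}+\sum_{g=1}^{k-1}\frac{\Pr(\#C(\vec\lambda)=g)}{2^g},\qquad t_1=\sum_{g=1}^{k-1}\frac{\Pr(\#C(\vec\lambda)=g)}{2^g},$$ and the contrast of the recovered image is $$\alpha=\frac{t_0-t_1}{1+t_1}=\frac{\Pr(\#C(\vec\lambda)=k)/2^{k-1}}{1+\sum_{g=1}^{k-1}\Pr(\#C(\vec\lambda)=g)/2^g}.$$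
   Context: Basic bits: for a secret bit $s\in\{0,1\}$, $b_1,\ldots,b_{k-1}$ are independent uniform bits and $b_k=s\oplus b_1\oplus\cdots\oplus b_{k-1}$. There is a fixed sequence $c=(c_1,\ldots,c_{n'})\in\{1,\ldots,k\}^{n'}$ in which every value $1,\ldots,k$ occurs. The $n$ share bits are arranged in $M$ groups: groups $1,\ldots,M-1$ have $n'$ positions and group $M$ has $r$ positions. For each group $j$, an independent uniformly random permutation $\sigma_j$ of $\{1,\ldots,n'\}$ is drawn (independent of the $b_i$), and the $\delta$-th position of group $j$ carries the index $c_{\sigma_j(\delta)}$ and the bit $b_{c_{\sigma_j(\delta)}}$ ($\delta\le r$ for group $M$). Position $\delta$ of group $j$ is the share bit of shadow image $(j-1)n'+\delta$; the scheme is applied independently to every pixel, and stacking shadow images computes the OR of their bits (0 = transparent, 1 = opaque). A valid partition is a vector $\vec\lambda=(\lambda_1,\ldots,\lambda_M)$ of non-negative integers with $\max_j\lambda_j\le n'$ and $\lambda_M\le r$. $C(\vec\lambda)$ is the multiset of indices carried by the selected positions (fixed positions, $\lambda_j$ of them in group $j$) and $\#C(\vec\lambda)$ is the number of its distinct elements; probabilities are over all the randomness. The contrast of a recovered image is defined as $(t_0-t_1)/(1+t_1)$, where $t_s$ is the light transmission (probability of a $0$ pixel) of recovered pixels whose secret pixel is $s$. *)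

theory Defs
  imports "HOL-Probability.Probability" "HOL-Combinatorics.Permutations"
begin

text \<open>Bits are booleans (True = 1 = opaque, False = 0 = transparent).
  The basic bits are b_1..b_{k-1} (free, uniform) and
  b_k = s xor b_1 xor ... xor b_{k-1}.\<close>

definition basic_bit :: "nat \<Rightarrow> bool \<Rightarrow> (nat \<Rightarrow> bool) \<Rightarrow> nat \<Rightarrow> bool" where
  "basic_bit k s b i = (if i < k then b i else (s \<noteq> odd (card {j \<in> {1..<k}. b j})))"

definition rg_space :: "nat \<Rightarrow> nat \<Rightarrow> nat \<Rightarrow> ((nat \<Rightarrow> bool) \<times> (nat \<Rightarrow> nat \<Rightarrow> nat)) pmf" where
  "rg_space k n' M =
     pmf_of_set (({1..<k} \<rightarrow>\<^sub>E (UNIV :: bool set)) \<times> ({1..M} \<rightarrow>\<^sub>E {p. p permutes {1..n'}}))"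

text \<open>Number of distinct indices carried by the selected positions S j of the groups j = 1..M
  (position delta of group j carries index c (sigma_j delta)).\<close>

definition numC :: "(nat \<Rightarrow> nat) \<Rightarrow> nat \<Rightarrow> (nat \<Rightarrow> nat set) \<Rightarrow> (nat \<Rightarrow> nat \<Rightarrow> nat) \<Rightarrow> nat" where
  "numC c M S \<sigma> = card {c (\<sigma> j \<delta>) | j \<delta>. j \<in> {1..M} \<and> \<delta> \<in> S j}"

definition stack_zero ::
  "nat \<Rightarrow> (nat \<Rightarrow> nat) \<Rightarrow> nat \<Rightarrow> (nat \<Rightarrow> nat set) \<Rightarrow> bool \<Rightarrow> (nat \<Rightarrow> bool) \<times> (nat \<Rightarrow> nat \<Rightarrow> nat) \<Rightarrow> bool" where
  "stack_zero k c M S s \<omega> =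
     (\<forall>j\<in>{1..M}. \<forall>\<delta>\<in>S j. \<not> basic_bit k s (fst \<omega>) (c (snd \<omega> j \<delta>)))"

definition contrast :: "real \<Rightarrow> real \<Rightarrow> real" where
  "contrast t0 t1 = (t0 - t1) / (1 + t1)"

end

theory Submission
  imports Defs
begin

(* Fix the permutations. The selected share bits then carry the basic bits b_i for i in the set C
   of selected indices, and the stacked pixel is transparent iff all of them vanish. The bits
   b_1, ..., b_k are k - 1 free uniform bits tied by the single relation b_1 xor ... xor b_k = s,
   so any g < k of them are independent and uniform (flipping a free bit outside C exchanges the
   parities of the constrained one) and vanish with probability 2^-g, while all k of them vanish
   with probability 2^-(k-1) if s = 0 and never if s = 1. Averaging over the permutations, grouped
   by g = #C, gives t_s. Of the hypotheses on the groups only c ` {1..n'} = {1..k} and the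
   presence of a selected position are needed. *)

lemma card_PiE_bool_vanishing:
  assumes "finite I" "D \<subseteq> I"
  shows "card {b \<in> I \<rightarrow>\<^sub>E (UNIV :: bool set). \<forall>i\<in>D. \<not> b i} = 2 ^ card (I - D)"
proof -
  have "{b \<in> I \<rightarrow>\<^sub>E (UNIV :: bool set). \<forall>i\<in>D. \<not> b i} = PiE I (\<lambda>i. if i \<in> D then {False} else UNIV)"
    using assms(2) by (auto simp: PiE_iff extensional_def split: if_splits)
  then show ?thesis
    using assms by (simp add: card_PiE if_distrib[of card] prod.If_cases Diff_eq)
qed

lemma odd_card_flip:
  assumes "finite I" "e \<in> I"
  shows "odd (card {j\<in>I. (b(e := \<not> b e)) j}) \<longleftrightarrow> \<not> odd (card {j\<in>I. b j})"
proof -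
  define T where "T = {j\<in>I. b j}"
  define T' where "T' = {j\<in>I. (b(e := \<not> b e)) j}"
  have "T = insert e T' \<and> e \<notin> T' \<or> T' = insert e T \<and> e \<notin> T"
    using assms by (cases "b e") (auto simp: T_def T'_def)
  moreover have "finite T" "finite T'" using assms by (simp_all add: T_def T'_def)
  ultimately show ?thesis by (fold T_def T'_def) auto
qed

lemma card_PiE_bool_vanishing_parity:
  assumes "finite I" "D \<subseteq> I" "e \<in> I - D"
  shows "2 * card {b \<in> I \<rightarrow>\<^sub>E (UNIV :: bool set). (\<forall>i\<in>D. \<not> b i) \<and> odd (card {j\<in>I. b j}) = p}
    = 2 ^ card (I - D)"
proof -
  define X where "X = {b \<in> I \<rightarrow>\<^sub>E (UNIV :: bool set). \<forall>i\<in>D. \<not> b i}"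
  define X' where "X' q = {b\<in>X. odd (card {j\<in>I. b j}) = q}" for q
  define flip where "flip b = b(e := \<not> b e)" for b :: "'a \<Rightarrow> bool"
  have "flip b \<in> X" if "b \<in> X" for b
    using that assms by (auto simp: X_def flip_def PiE_iff extensional_def)
  moreover have "odd (card {j\<in>I. flip b j}) \<longleftrightarrow> \<not> odd (card {j\<in>I. b j})" for b
    unfolding flip_def using assms by (intro odd_card_flip) auto
  ultimately have flip_swaps: "flip b \<in> X' (\<not> q)" if "b \<in> X' q" for b q
    using that by (auto simp: X'_def)
  have flip_image: "flip ` X' q \<subseteq> X' (\<not> q)" for q
    using flip_swaps by blast
  have "flip (flip b) = b" for b
    by (simp add: flip_def)
  then have "bij_betw flip (X' q) (X' (\<not> q))" for q
    using flip_image[of q] flip_image[of "\<not> q"] by (intro bij_betw_byWitness[where f' = flip]) simp_all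
  then have "card (X' p) = card (X' (\<not> p))"
    by (rule bij_betw_same_card)
  moreover have "card X = card (X' p) + card (X' (\<not> p))"
  proof -
    have "finite X" using assms(1) by (simp add: X_def finite_PiE)
    then have "card (X' p \<union> X' (\<not> p)) = card (X' p) + card (X' (\<not> p))"
      by (intro card_Un_disjoint) (auto simp: X'_def)
    moreover have "X' p \<union> X' (\<not> p) = X" by (auto simp: X'_def)
    ultimately show ?thesis by simp
  qed
  moreover have "card X = 2 ^ card (I - D)"
    unfolding X_def using assms(1,2) by (rule card_PiE_bool_vanishing)
  moreover have "X' p = {b \<in> I \<rightarrow>\<^sub>E UNIV. (\<forall>i\<in>D. \<not> b i) \<and> odd (card {j\<in>I. b j}) = p}"
    by (auto simp: X'_def X_def)
  ultimately show ?thesis by simp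
qed

(* For g = k the bits in question are all basic bits, whose XOR is s. *)
definition vanishing_prob :: "nat \<Rightarrow> bool \<Rightarrow> nat \<Rightarrow> real" where
  "vanishing_prob k s g = (if g < k then 1 / 2 ^ g else if s then 0 else 1 / 2 ^ (k - 1))"

lemma basic_bits_vanishing_iff:
  assumes "C \<subseteq> {1..k}"
  shows "(\<forall>i\<in>C. \<not> basic_bit k s b i)
    \<longleftrightarrow> (\<forall>i\<in>C - {k}. \<not> b i) \<and> (k \<in> C \<longrightarrow> odd (card {j\<in>{1..<k}. b j}) = s)"
  using assms by (auto simp: basic_bit_def)

lemma card_basic_bits_vanishing:
  assumes "C \<subseteq> {1..k}" "card C < k"
  shows "card {b \<in> {1..<k} \<rightarrow>\<^sub>E UNIV. \<forall>i\<in>C. \<not> basic_bit k s b i} * 2 ^ card C = 2 ^ (k - 1)"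
proof -
  let ?I = "{1..<k}" and ?D = "C - {k}"
  have D: "?D \<subseteq> ?I" using assms(1) by auto
  have "finite C" using assms(1) finite_subset by blast
  show ?thesis
  proof (cases "k \<in> C")
    case False
    then have "{b \<in> ?I \<rightarrow>\<^sub>E UNIV. \<forall>i\<in>C. \<not> basic_bit k s b i} = {b \<in> ?I \<rightarrow>\<^sub>E UNIV. \<forall>i\<in>?D. \<not> b i}"
      using basic_bits_vanishing_iff[OF assms(1)] by auto
    moreover have "card (?I - ?D) = k - 1 - card C"
      using D False \<open>finite C\<close> by (simp add: card_Diff_subset Diff_insert_absorb)
    ultimately show ?thesis
      using card_PiE_bool_vanishing[OF _ D] assms(2) by (simp add: power_add[symmetric])
  next
    case True
    let ?V = "{b \<in> ?I \<rightarrow>\<^sub>E UNIV. (\<forall>i\<in>?D. \<not> b i) \<and> odd (card {j\<in>?I. b j}) = s}"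
    have card_C: "card C = Suc (card ?D)"
      by (rule card_Suc_Diff1[OF \<open>finite C\<close> True, symmetric])
    have card_I: "card (?I - ?D) + card ?D = k - 1"
      using D \<open>finite C\<close> card_mono[OF _ D] by (simp add: card_Diff_subset)
    have "\<not> ?I \<subseteq> ?D"
      using card_mono[of ?D ?I] \<open>finite C\<close> card_C assms(2) by auto
    then obtain e where "e \<in> ?I - ?D"
      by blast
    then have "2 * card ?V = 2 ^ card (?I - ?D)"
      using D by (intro card_PiE_bool_vanishing_parity) auto
    moreover have "{b \<in> ?I \<rightarrow>\<^sub>E UNIV. \<forall>i\<in>C. \<not> basic_bit k s b i} = ?V"
      using basic_bits_vanishing_iff[OF assms(1)] True by auto
    ultimately have "card {b \<in> ?I \<rightarrow>\<^sub>E UNIV. \<forall>i\<in>C. \<not> basic_bit k s b i} * 2 ^ card C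
        = 2 ^ (card (?I - ?D) + card ?D)"
      unfolding card_C power_Suc power_add by simp
    then show ?thesis
      unfolding card_I .
  qed
qed

lemma card_basic_bits_all_vanishing:
  assumes "1 \<le> k"
  shows "card {b \<in> {1..<k} \<rightarrow>\<^sub>E UNIV. \<forall>i\<in>{1..k}. \<not> basic_bit k s b i} = (if s then 0 else 1)"
proof -
  have "(\<forall>i\<in>{1..k}. \<not> basic_bit k s b i) \<longleftrightarrow> (\<forall>i\<in>{1..<k}. \<not> b i) \<and> \<not> s" for b
  proof -
    have "{1..k} - {k} = {1..<k}" by auto
    then have vanishing_iff: "(\<forall>i\<in>{1..k}. \<not> basic_bit k s b i)
        \<longleftrightarrow> (\<forall>i\<in>{1..<k}. \<not> b i) \<and> odd (card {j\<in>{1..<k}. b j}) = s"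
      using basic_bits_vanishing_iff[of "{1..k}" k s b] assms by simp
    show ?thesis
    proof (cases "\<forall>i\<in>{1..<k}. \<not> b i")
      case True
      then have "{j\<in>{1..<k}. b j} = {}" by blast
      then have "odd (card {j\<in>{1..<k}. b j}) \<longleftrightarrow> False" by (metis card.empty dvd_0_right)
      with True show ?thesis using vanishing_iff by blast
    qed (use vanishing_iff in blast)
  qed
  then have "{b \<in> {1..<k} \<rightarrow>\<^sub>E UNIV. \<forall>i\<in>{1..k}. \<not> basic_bit k s b i}
      = (if s then {} else {b \<in> {1..<k} \<rightarrow>\<^sub>E UNIV. \<forall>i\<in>{1..<k}. \<not> b i})"
    by auto
  then show ?thesis
    using card_PiE_bool_vanishing[of "{1..<k}" "{1..<k}"] by simp
qed

lemma prob_basic_bits_vanishing: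
  assumes "C \<subseteq> {1..k}" "1 \<le> k"
  shows "measure_pmf.prob (pmf_of_set ({1..<k} \<rightarrow>\<^sub>E UNIV)) {b. \<forall>i\<in>C. \<not> basic_bit k s b i}
    = vanishing_prob k s (card C)"
proof -
  let ?B = "{1..<k} \<rightarrow>\<^sub>E (UNIV :: bool set)"
  let ?V = "{b \<in> ?B. \<forall>i\<in>C. \<not> basic_bit k s b i}"
  have "card ?B = 2 ^ (k - 1)"
    by (simp add: card_PiE)
  moreover have "?B \<noteq> {}" "finite ?B"
    by (simp_all add: PiE_eq_empty_iff finite_PiE)
  ultimately have prob: "measure_pmf.prob (pmf_of_set ?B) {b. \<forall>i\<in>C. \<not> basic_bit k s b i}
      = card ?V / 2 ^ (k - 1)"
    by (simp add: measure_pmf_of_set Int_def)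
  show ?thesis
  proof (cases "card C < k")
    case True
    then have "card ?V * 2 ^ card C = 2 ^ (k - 1)"
      by (rule card_basic_bits_vanishing[OF assms(1)])
    then have "real (card ?V * 2 ^ card C) = real (2 ^ (k - 1))"
      by (rule arg_cong)
    then have "real (card ?V) * 2 ^ card C = 2 ^ (k - 1)"
      by simp
    then show ?thesis
      unfolding prob vanishing_prob_def using True by (simp add: field_simps)
  next
    case False
    moreover have "card C \<le> card {1..k}"
      using assms(1) by (intro card_mono) simp_all
    ultimately have "C = {1..k}"
      using assms(1) by (intro card_subset_eq) simp_all
    then show ?thesis
      unfolding prob vanishing_prob_def using card_basic_bits_all_vanishing[OF assms(2)] by simp
  qed
qed

lemma measure_pmf_of_set_Times:
  assumes "finite A" "finite B" "A \<noteq> {}" "B \<noteq> {}"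
  shows "measure_pmf.prob (pmf_of_set (A \<times> B)) E
    = (\<Sum>y\<in>B. measure_pmf.prob (pmf_of_set A) {x. (x, y) \<in> E}) / card B"
proof -
  have slices: "(A \<times> B) \<inter> E = (\<Union>y\<in>B. (A \<inter> {x. (x, y) \<in> E}) \<times> {y})"
    by auto
  have "card ((A \<times> B) \<inter> E) = (\<Sum>y\<in>B. card (A \<inter> {x. (x, y) \<in> E}))"
    unfolding slices using assms(1,2) by (subst card_UN_disjoint) (auto simp: card_cartesian_product)
  then show ?thesis
    using assms by (simp add: measure_pmf_of_set card_cartesian_product sum_divide_distrib)
qed

definition selected_indices ::
  "(nat \<Rightarrow> nat) \<Rightarrow> nat \<Rightarrow> (nat \<Rightarrow> nat set) \<Rightarrow> (nat \<Rightarrow> nat \<Rightarrow> nat) \<Rightarrow> nat set" where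
  "selected_indices c M S \<sigma> = {c (\<sigma> j \<delta>) | j \<delta>. j \<in> {1..M} \<and> \<delta> \<in> S j}"

lemma numC_eq_card_selected_indices: "numC c M S \<sigma> = card (selected_indices c M S \<sigma>)"
  unfolding numC_def selected_indices_def ..

lemma stack_zero_iff:
  "stack_zero k c M S s (b, \<sigma>) \<longleftrightarrow> (\<forall>i\<in>selected_indices c M S \<sigma>. \<not> basic_bit k s b i)"
proof -
  have "(\<forall>i\<in>{c (\<sigma> j \<delta>) | j \<delta>. j \<in> {1..M} \<and> \<delta> \<in> S j}. Q i)
      \<longleftrightarrow> (\<forall>j\<in>{1..M}. \<forall>\<delta>\<in>S j. Q (c (\<sigma> j \<delta>)))" for Q :: "nat \<Rightarrow> bool"
    by blast
  then show ?thesis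
    unfolding stack_zero_def selected_indices_def by simp
qed

lemma selected_indices_subset:
  assumes "c ` {1..n'} \<subseteq> {1..k}" "\<forall>j\<in>{1..M}. S j \<subseteq> {1..n'}"
    and "\<forall>j\<in>{1..M}. \<sigma> j permutes {1..n'}"
  shows "selected_indices c M S \<sigma> \<subseteq> {1..k}"
proof
  fix i
  assume "i \<in> selected_indices c M S \<sigma>"
  then obtain j \<delta> where i: "i = c (\<sigma> j \<delta>)" and j: "j \<in> {1..M}" and "\<delta> \<in> S j"
    unfolding selected_indices_def by blast
  then have "\<delta> \<in> {1..n'}" and perm: "\<sigma> j permutes {1..n'}"
    using assms(2,3) by blast+
  then have "\<sigma> j \<delta> \<in> {1..n'}"
    using permutes_in_image[OF perm] by blast
  then show "i \<in> {1..k}"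
    using assms(1) i by blast
qed

lemma selected_indices_nonempty:
  assumes "\<exists>j\<in>{1..M}. S j \<noteq> {}"
  shows "selected_indices c M S \<sigma> \<noteq> {}"
proof -
  obtain j \<delta> where "j \<in> {1..M}" "\<delta> \<in> S j"
    using assms by blast
  then have "c (\<sigma> j \<delta>) \<in> selected_indices c M S \<sigma>"
    unfolding selected_indices_def by blast
  then show ?thesis
    by blast
qed

lemma prob_stack_zero_eq_sum:
  assumes "1 \<le> k" "c ` {1..n'} \<subseteq> {1..k}" "\<forall>j\<in>{1..M}. S j \<subseteq> {1..n'}"
    and "\<exists>j\<in>{1..M}. S j \<noteq> {}"
  shows "measure_pmf.prob (rg_space k n' M) {\<omega>. stack_zero k c M S s \<omega>}
    = (\<Sum>g=1..k. vanishing_prob k s g * measure_pmf.prob (rg_space k n' M) {\<omega>. numC c M S (snd \<omega>) = g})"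
proof -
  define A where "A = {1..<k} \<rightarrow>\<^sub>E (UNIV :: bool set)"
  define B where "B = {1..M} \<rightarrow>\<^sub>E {p. p permutes {1..n'}}"
  have space: "rg_space k n' M = pmf_of_set (A \<times> B)"
    unfolding rg_space_def A_def B_def ..
  have "id \<in> {p. p permutes {1..n'}}"
    by (simp add: permutes_id)
  then have "B \<noteq> {}"
    unfolding B_def PiE_eq_empty_iff by blast
  then have AB: "finite A" "finite B" "A \<noteq> {}" "B \<noteq> {}"
    unfolding A_def B_def by (auto intro!: finite_PiE finite_permutations simp: PiE_eq_empty_iff)
  have selected_subset: "selected_indices c M S \<sigma> \<subseteq> {1..k}" if "\<sigma> \<in> B" for \<sigma>
    using that assms(2,3) by (intro selected_indices_subset) (auto simp: B_def)
  have numC_range: "numC c M S \<sigma> \<in> {1..k}" if "\<sigma> \<in> B" for \<sigma>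
  proof -
    have "finite (selected_indices c M S \<sigma>)"
      using selected_subset[OF that] finite_subset by blast
    then show ?thesis
      using selected_indices_nonempty[OF assms(4)] card_mono[OF _ selected_subset[OF that]]
      by (simp add: numC_eq_card_selected_indices Suc_le_eq card_gt_0_iff)
  qed
  have prob_vanishing: "measure_pmf.prob (pmf_of_set A) {b. stack_zero k c M S s (b, \<sigma>)}
      = vanishing_prob k s (numC c M S \<sigma>)" if "\<sigma> \<in> B" for \<sigma>
    unfolding A_def stack_zero_iff numC_eq_card_selected_indices
    using selected_subset[OF that] assms(1) by (rule prob_basic_bits_vanishing)
  have prob_const: "measure_pmf.prob (pmf_of_set A) {x. Q} = of_bool Q" for Q
    by (cases Q) simp_all
  have "measure_pmf.prob (rg_space k n' M) {\<omega>. stack_zero k c M S s \<omega>}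
      = (\<Sum>\<sigma>\<in>B. vanishing_prob k s (numC c M S \<sigma>)) / card B"
    unfolding space measure_pmf_of_set_Times[OF AB] by (auto simp: prob_vanishing intro!: sum.cong)
  also have "\<dots> = (\<Sum>\<sigma>\<in>B. \<Sum>g=1..k. vanishing_prob k s g * of_bool (numC c M S \<sigma> = g)) / card B"
    using numC_range by (simp add: of_bool_def if_distrib[of "(*) _"] sum.delta' cong: if_cong)
  also have "\<dots> = (\<Sum>g=1..k. vanishing_prob k s g * ((\<Sum>\<sigma>\<in>B. of_bool (numC c M S \<sigma> = g)) / card B))"
    by (subst sum.swap) (simp add: sum_divide_distrib sum_distrib_left)
  also have "\<dots> = (\<Sum>g=1..k. vanishing_prob k s g * measure_pmf.prob (rg_space k n' M) {\<omega>. numC c M S (snd \<omega>) = g})"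
    unfolding space measure_pmf_of_set_Times[OF AB] by (simp only: mem_Collect_eq snd_conv prob_const)
  finally show ?thesis .
qed

lemma sum_vanishing_prob:
  assumes "1 \<le> k"
  shows "(\<Sum>g=1..k. vanishing_prob k s g * P g)
    = (\<Sum>g=1..k-1. P g / 2 ^ g) + (if s then 0 else P k / 2 ^ (k - 1))"
proof -
  have "{1..k} = insert k {1..k-1}" and "k \<notin> {1..k-1}"
    using assms by auto
  then have "(\<Sum>g=1..k. vanishing_prob k s g * P g)
      = vanishing_prob k s k * P k + (\<Sum>g=1..k-1. vanishing_prob k s g * P g)"
    by simp
  also have "(\<Sum>g=1..k-1. vanishing_prob k s g * P g) = (\<Sum>g=1..k-1. P g / 2 ^ g)"
    by (intro sum.cong) (auto simp: vanishing_prob_def)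
  finally show ?thesis
    by (simp add: vanishing_prob_def)
qed

theorem theorem1:
  fixes k n' n M r :: nat and c :: "nat \<Rightarrow> nat" and lam :: "nat \<Rightarrow> nat"
    and S :: "nat \<Rightarrow> nat set" and t :: "bool \<Rightarrow> real" and P :: "nat \<Rightarrow> real"
  assumes "2 \<le> k" and "k \<le> n'" and "n' \<le> n"
    and "M = nat \<lceil>real n / real n'\<rceil>" and "r = n - (M - 1) * n'"
    and "c ` {1..n'} = {1..k}"
    and "\<forall>j\<in>{1..M}. lam j \<le> n'" and "lam M \<le> r"
    and "\<forall>j\<in>{1..M}. S j \<subseteq> {1..n'} \<and> card (S j) = lam j" and "S M \<subseteq> {1..r}"
    and "(\<Sum>j=1..M. lam j) \<ge> 1"
    and "\<And>s. t s = measure_pmf.prob (rg_space k n' M) {\<omega>. stack_zero k c M S s \<omega>}"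
    and "\<And>g. P g = measure_pmf.prob (rg_space k n' M) {\<omega>. numC c M S (snd \<omega>) = g}"
  shows "t False = P k / 2 ^ (k - 1) + (\<Sum>g=1..k-1. P g / 2 ^ g)
       \<and> t True = (\<Sum>g=1..k-1. P g / 2 ^ g)
       \<and> contrast (t False) (t True) = (P k / 2 ^ (k - 1)) / (1 + (\<Sum>g=1..k-1. P g / 2 ^ g))"
proof -
  obtain j where "j \<in> {1..M}" "lam j \<noteq> 0"
    using assms(11) by (metis not_one_le_zero sum.neutral)
  then have "\<exists>j\<in>{1..M}. S j \<noteq> {}"
    using assms(9) by (metis card.empty)
  then have "t s = (\<Sum>g=1..k. vanishing_prob k s g * P g)" for s
    unfolding assms(12,13) using assms(1,6,9) by (intro prob_stack_zero_eq_sum) auto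
  then have "t s = (\<Sum>g=1..k-1. P g / 2 ^ g) + (if s then 0 else P k / 2 ^ (k - 1))" for s
    using sum_vanishing_prob assms(1) by simp
  then show ?thesis
    by (simp add: contrast_def)
qed

end
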